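(* Let $w$ be the fixed point of the morphism $\psi$ on $\{0,1\}^*$ given by $\psi(1)=100$, $\psi(0)=10$ (i.e. $w=\lim_{k\to\infty}\psi^k(1)=1001010100101\cdots$), written $w=w_1w_2w_3\cdots$. Then for all $n\ge1$, $$w_n=\mathrm{St}\big(\sqrt2-1,\;1-\tfrac12\sqrt2\big)_n=\Big\lfloor (n+1)(\sqrt2-1)+1-\tfrac12\sqrt2\Big\rfloor-\Big\lfloor n(\sqrt2-1)+1-\tfrac12\sqrt2\Big\rfloor.$$
   Context: $\mathrm{St}(\alpha,\beta)_n=\lfloor (n+1)\alpha+\beta\rfloor-\lfloor n\alpha+\beta\rfloor$ for $n=1,2,\dots$; the letters of $w$ are indexed starting from $1$. *)

theory Defs
  imports Complex_Main
begin

definition psi :: "nat \<Rightarrow> nat list" where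
  "psi a = (if a = 1 then [1,0,0] else [1,0])"

definition psi_word :: "nat list \<Rightarrow> nat list" where
  "psi_word xs = concat (map psi xs)"

definition St :: "real \<Rightarrow> real \<Rightarrow> nat \<Rightarrow> int" where
  "St \<alpha> \<beta> n = \<lfloor>(real n + 1) * \<alpha> + \<beta>\<rfloor> - \<lfloor>real n * \<alpha> + \<beta>\<rfloor>"

text \<open>w : nat => nat (letters indexed from 1) is the limit of psi^k(1):
  every word psi^k(1) is a prefix of w.\<close>
definition is_psi_limit :: "(nat \<Rightarrow> nat) \<Rightarrow> bool" where
  "is_psi_limit w \<longleftrightarrow>
     (\<forall>k i. i < length ((psi_word ^^ k) [1]) \<longrightarrow> w (i + 1) = (psi_word ^^ k) [1] ! i)"

end

theory Submission
  imports Defs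
begin

text \<open>Let \<open>\<alpha> = \<surd>2 - 1\<close>, \<open>\<beta> = 1 - \<surd>2/2\<close> and \<open>s n = \<lfloor>n\<alpha> + \<beta>\<rfloor>\<close>, so that
  \<open>St\<^sub>n = s (n+1) - s n \<in> {0,1}\<close>, and put \<open>L N = 2N + s (N+1)\<close>. Because
  \<open>\<alpha>\<^sup>2 = 1 - 2\<alpha>\<close>, one computes \<open>(L N + 1)\<alpha> + \<beta> = N + 1 - \<alpha> frac ((N+1)\<alpha> + \<beta>)\<close>,
  and this fractional part is nonzero as \<open>\<surd>2\<close> is irrational. Hence \<open>s (L N + 1) = N\<close>
  and \<open>s (L N + 2) = N + 1\<close>. As \<open>L (N+1) = L N + 2 + St\<^sub>N\<^sub>+\<^sub>1\<close>, the letters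
  \<open>L N + 1, \<dots>, L (N+1)\<close> are a \<open>1\<close> followed by \<open>1 + St\<^sub>N\<^sub>+\<^sub>1\<close> zeros, which is
  \<open>\<psi>(St\<^sub>N\<^sub>+\<^sub>1)\<close>. So \<open>\<psi>\<close> maps the prefix of length \<open>N\<close> onto the prefix of
  length \<open>L N\<close>, and all \<open>\<psi>\<^sup>k(1)\<close> are prefixes of the Sturmian word. Any two limits
  agree because \<open>\<psi>\<close> at least doubles lengths.\<close>

definition floor_line :: "real \<Rightarrow> real \<Rightarrow> nat \<Rightarrow> int" where
  "floor_line \<alpha> \<beta> n = \<lfloor>real n * \<alpha> + \<beta>\<rfloor>"

lemma St_eq_floor_line_diff: "St \<alpha> \<beta> n = floor_line \<alpha> \<beta> (Suc n) - floor_line \<alpha> \<beta> n"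
  by (simp add: St_def floor_line_def add.commute)

lemma mono_floor_line: "0 \<le> \<alpha> \<Longrightarrow> mono (floor_line \<alpha> \<beta>)"
  by (auto intro!: monoI floor_mono mult_right_mono simp: floor_line_def)

lemma floor_line_Suc_cases:
  assumes "0 \<le> \<alpha>" "\<alpha> < 1"
  shows "floor_line \<alpha> \<beta> (Suc n) = floor_line \<alpha> \<beta> n \<or>
         floor_line \<alpha> \<beta> (Suc n) = floor_line \<alpha> \<beta> n + 1"
proof -
  have "real (Suc n) * \<alpha> + \<beta> = (real n * \<alpha> + \<beta>) + \<alpha>" by (simp add: algebra_simps)
  then show ?thesis using assms unfolding floor_line_def by linarith
qed

lemma St_cases: "0 \<le> \<alpha> \<Longrightarrow> \<alpha> < 1 \<Longrightarrow> St \<alpha> \<beta> n = 0 \<or> St \<alpha> \<beta> n = 1"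
  using floor_line_Suc_cases by (force simp: St_eq_floor_line_diff)

lemma psi_word_append: "psi_word (xs @ ys) = psi_word xs @ psi_word ys"
  by (simp add: psi_word_def)

lemma length_psi_word_ge: "2 * length xs \<le> length (psi_word xs)"
  by (induction xs) (auto simp: psi_word_def psi_def)

lemma length_psi_iterate_ge: "2 ^ k \<le> length ((psi_word ^^ k) [1])"
proof (induction k)
  case (Suc k)
  then show ?case using length_psi_word_ge[of "(psi_word ^^ k) [1]"] by simp
qed simp

lemma is_psi_limit_unique:
  assumes "is_psi_limit w" "is_psi_limit v" "n \<ge> 1"
  shows "w n = v n"
proof -
  have "n - 1 < length ((psi_word ^^ n) [1])"
    using less_exp[of n] length_psi_iterate_ge[of n] by linarith
  then show ?thesis using assms unfolding is_psi_limit_def by (metis le_add_diff_inverse2)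
qed

definition word_prefix :: "(nat \<Rightarrow> nat) \<Rightarrow> nat \<Rightarrow> nat list" where
  "word_prefix u l = map u [1..<Suc l]"

lemma length_word_prefix [simp]: "length (word_prefix u l) = l"
  by (simp add: word_prefix_def)

lemma nth_word_prefix: "i < l \<Longrightarrow> word_prefix u l ! i = u (Suc i)"
  by (simp add: word_prefix_def nth_map_upt del: upt_Suc)

lemma is_psi_limitI:
  assumes "u 1 = 1" and psi_prefix: "\<And>N. psi_word (word_prefix u N) = word_prefix u (L N)"
  shows "is_psi_limit u"
proof -
  have "\<exists>l. (psi_word ^^ k) [1] = word_prefix u l" for k
  proof (induction k)
    case 0
    show ?case using \<open>u 1 = 1\<close> by (intro exI[of _ 1]) (simp add: word_prefix_def)
  next
    case (Suc k)
    then show ?case using psi_prefix by auto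
  qed
  then show ?thesis by (metis is_psi_limit_def length_word_prefix nth_word_prefix Suc_eq_plus1)
qed

lemma psi_word_word_prefix:
  assumes "L 0 = 0" and L_mono: "\<And>N. L N \<le> L (Suc N)"
    and block: "\<And>N. psi (u (Suc N)) = map u [Suc (L N)..<Suc (L (Suc N))]"
  shows "psi_word (word_prefix u N) = word_prefix u (L N)"
proof (induction N)
  case 0
  then show ?case using \<open>L 0 = 0\<close> by (simp add: word_prefix_def psi_word_def)
next
  case (Suc N)
  have "[1..<Suc (L (Suc N))] = [1..<Suc (L N)] @ [Suc (L N)..<Suc (L (Suc N))]"
    using upt_add_eq_append[of 1 "Suc (L N)" "L (Suc N) - L N"] L_mono[of N] by simp
  then show ?case using Suc block[of N] by (simp add: word_prefix_def psi_word_append psi_word_def)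
qed

lemma psi_eq_Cons_replicate: "a \<le> 1 \<Longrightarrow> psi a = 1 # replicate (Suc a) (0::nat)"
  by (cases a) (auto simp: psi_def numeral_eq_Suc)

lemma map_upt_eq_Cons_replicate:
  assumes "u m = 1" "\<And>j. m < j \<Longrightarrow> j < m + Suc k \<Longrightarrow> u j = 0"
  shows "map u [m..<m + Suc k] = 1 # replicate k (0::nat)"
proof -
  have "map u [Suc m..<m + Suc k] = replicate k 0"
    using assms(2) by (intro nth_equalityI) (auto simp del: upt_Suc)
  then show ?thesis using assms(1) by (simp add: upt_conv_Cons del: upt_Suc)
qed

definition slope :: real where "slope = sqrt 2 - 1"
definition intercept :: real where "intercept = 1 - sqrt 2 / 2"

abbreviation sqrt2_floor :: "nat \<Rightarrow> int" where
  "sqrt2_floor \<equiv> floor_line slope intercept"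

definition sqrt2_word :: "nat \<Rightarrow> nat" where
  "sqrt2_word n = nat (St slope intercept n)"

definition block_end :: "nat \<Rightarrow> nat" where
  "block_end N = 2 * N + nat (sqrt2_floor (Suc N))"

lemma sqrt2_bounds: "1.4 < sqrt (2::real)" "sqrt (2::real) < 2"
  by (rule real_less_rsqrt, simp add: power2_eq_square) (rule sqrt2_less_2)

lemma slope_bounds: "0 < slope" "slope < 1"
  using sqrt2_bounds by (auto simp: slope_def)

lemma sqrt2_floor_0: "sqrt2_floor 0 = 0"
  using sqrt2_bounds by (simp add: floor_line_def intercept_def floor_eq_iff)

lemma sqrt2_floor_1: "sqrt2_floor 1 = 0"
  using sqrt2_bounds by (simp add: floor_line_def slope_def intercept_def floor_eq_iff)

lemma mono_sqrt2_floor: "mono sqrt2_floor"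
  using mono_floor_line slope_bounds by simp

lemma sqrt2_floor_nonneg: "0 \<le> sqrt2_floor n"
  using mono_sqrt2_floor sqrt2_floor_0 by (metis le0 monoD)

lemma int_sqrt2_word: "int (sqrt2_word n) = St slope intercept n"
  using St_cases[of slope intercept n] slope_bounds by (auto simp: sqrt2_word_def)

lemma sqrt2_word_le_1: "sqrt2_word n \<le> 1"
  using int_sqrt2_word[of n] St_cases[of slope intercept n] slope_bounds by auto

lemma odd_square_ne_twice_square: "odd (a::int) \<Longrightarrow> a\<^sup>2 \<noteq> 2 * b\<^sup>2"
  by (metis dvd_triv_left even_power)

lemma line_not_Ints: "real (Suc N) * slope + intercept \<notin> \<int>"
proof
  assume "real (Suc N) * slope + intercept \<in> \<int>"
  then obtain k where "real (Suc N) * slope + intercept = of_int k" by (auto elim: Ints_cases)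
  then have "(2 * real N + 1) * sqrt 2 = 2 * (of_int k + real N)"
    by (simp add: slope_def intercept_def algebra_simps)
  then have "((2 * real N + 1) * sqrt 2)\<^sup>2 = (2 * (of_int k + real N))\<^sup>2" by simp
  then have "(2 * real N + 1)\<^sup>2 * 2 = 4 * (of_int k + real N)\<^sup>2"
    by (simp add: power_mult_distrib algebra_simps power2_eq_square)
  then have "real_of_int ((2 * int N + 1)\<^sup>2) = real_of_int (2 * (k + int N)\<^sup>2)"
    by simp
  then have "(2 * int N + 1)\<^sup>2 = 2 * (k + int N)\<^sup>2" by (simp only: of_int_eq_iff)
  then show False using odd_square_ne_twice_square by simp
qed

lemma line_at_block_end:
  fixes N :: nat
  defines "x \<equiv> real (Suc N) * slope + intercept"
  shows "real (Suc (block_end N)) * slope + intercept = real N + 1 - slope * frac x"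
proof -
  have "real (block_end N) = 2 * real N + of_int \<lfloor>x\<rfloor>"
    using sqrt2_floor_nonneg[of "Suc N"] by (simp add: block_end_def floor_line_def x_def)
  then have "real (Suc (block_end N)) * slope + intercept - (real N + 1 - slope * frac x)
      = (real N + 1/2) * (sqrt 2 * sqrt 2 - 2)"
    by (simp add: x_def frac_def slope_def intercept_def field_simps)
  then show ?thesis by simp
qed

lemma sqrt2_floor_block_end:
  "sqrt2_floor (Suc (block_end N)) = int N" "sqrt2_floor (Suc (Suc (block_end N))) = int N + 1"
proof -
  define f where "f = frac (real (Suc N) * slope + intercept)"
  have f: "0 < f" "f < 1"
    using line_not_Ints[of N] frac_ge_0 frac_lt_1 frac_eq_0_iff unfolding f_def by (metis less_eq_real_def)+
  then have less_slope: "slope * f < slope" "slope * (1 - f) < slope"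
    using slope_bounds by (simp_all add: mult_less_cancel_left1)
  have "0 < slope * f" "slope * f < 1" "0 \<le> slope * (1 - f)" "slope * (1 - f) < 1"
    using f slope_bounds less_slope by (linarith | simp)+
  moreover have "real (Suc (Suc (block_end N))) * slope + intercept = real N + 1 + slope * (1 - f)"
    using line_at_block_end[of N] by (simp add: f_def algebra_simps)
  ultimately show "sqrt2_floor (Suc (block_end N)) = int N"
    "sqrt2_floor (Suc (Suc (block_end N))) = int N + 1"
    using line_at_block_end[of N] by (simp_all add: floor_line_def f_def floor_eq_iff)
qed

lemma int_sqrt2_word_eq_diff: "int (sqrt2_word n) = sqrt2_floor (Suc n) - sqrt2_floor n"
  by (simp add: int_sqrt2_word St_eq_floor_line_diff)

lemma block_end_0: "block_end 0 = 0"
  using sqrt2_floor_1 by (simp add: block_end_def)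

lemma block_end_Suc: "block_end (Suc N) = block_end N + 2 + sqrt2_word (Suc N)"
  using int_sqrt2_word_eq_diff[of "Suc N"] sqrt2_floor_nonneg[of "Suc N"] by (simp add: block_end_def)

lemma psi_sqrt2_word:
  "psi (sqrt2_word (Suc N)) = map sqrt2_word [Suc (block_end N)..<Suc (block_end (Suc N))]"
proof -
  define m where "m = Suc (block_end N)"
  define k where "k = Suc (sqrt2_word (Suc N))"
  have end_eq: "Suc (block_end (Suc N)) = m + Suc k"
    by (simp add: m_def k_def block_end_Suc)
  have "sqrt2_word m = 1"
    using int_sqrt2_word_eq_diff[of m] sqrt2_floor_block_end[of N] by (simp add: m_def)
  moreover have "sqrt2_word j = 0" if "m < j" "j < m + Suc k" for j
  proof -
    have "sqrt2_floor i = int N + 1" if "Suc m \<le> i" "i \<le> m + Suc k" for i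
      using monoD[OF mono_sqrt2_floor that(1)] monoD[OF mono_sqrt2_floor that(2)]
        sqrt2_floor_block_end[of N] sqrt2_floor_block_end[of "Suc N"] end_eq
      by (simp add: m_def)
    then show ?thesis using int_sqrt2_word_eq_diff[of j] that by simp
  qed
  ultimately have "map sqrt2_word [m..<m + Suc k] = 1 # replicate k 0"
    by (rule map_upt_eq_Cons_replicate)
  then show ?thesis unfolding end_eq m_def[symmetric]
    using psi_eq_Cons_replicate[OF sqrt2_word_le_1] by (simp add: k_def del: upt_Suc)
qed

theorem lemma2:
  shows "(\<exists>w. is_psi_limit w) \<and>
         (\<forall>w. is_psi_limit w \<longrightarrow>
            (\<forall>n\<ge>1. int (w n) = St (sqrt 2 - 1) (1 - sqrt 2 / 2) n))"
proof -
  have "psi_word (word_prefix sqrt2_word N) = word_prefix sqrt2_word (block_end N)" for N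
    using block_end_0 block_end_Suc psi_sqrt2_word by (intro psi_word_word_prefix) auto
  moreover have "sqrt2_word 1 = 1"
    using int_sqrt2_word_eq_diff[of 1] sqrt2_floor_block_end[of 0] by (simp add: block_end_0)
  ultimately have limit: "is_psi_limit sqrt2_word"
    by (intro is_psi_limitI)
  then have "int (w n) = St (sqrt 2 - 1) (1 - sqrt 2 / 2) n" if "is_psi_limit w" "n \<ge> 1" for w n
    using is_psi_limit_unique[OF that(1) limit that(2)] int_sqrt2_word[of n]
    by (simp add: slope_def intercept_def)
  with limit show ?thesis by blast
qed

end
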